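(* For each integer $d\geq 1$ there is a constant $b_d>1$ such that the following holds. Let $G$ be a graph without isolated vertices and of maximum degree at most $d$, and let $U\subseteq V(G)$. Then $|\varphi(G)\leftarrow U|\leq |\varphi(G)|/2^{|U|/b_d}$.
   Context: For a graph $G$ without isolated vertices, $\varphi(G)$ is the CNF whose variables are the vertices of $G$ and whose clauses are $(u\vee v)$ for all edges $\{u,v\}\in E(G)$. Boolean functions are identified with their sets of satisfying assignments (sets of literals, one per variable), and $|\cdot|$ denotes the number of satisfying assignments. For $U\subseteq V(G)$, $\varphi(G)\leftarrow U$ denotes the set of satisfying assignments of $\varphi(G)$ that assign every variable of $U$ the value true. *)

theory Defs
  imports Complex_Main
begin

definition simple_graph :: "'a set \<Rightarrow> ('a \<Rightarrow> 'a \<Rightarrow> bool) \<Rightarrow> bool" where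
  "simple_graph V E \<longleftrightarrow> finite V \<and> (\<forall>u v. E u v \<longrightarrow> u \<in> V \<and> v \<in> V)
     \<and> (\<forall>u v. E u v \<longrightarrow> E v u) \<and> (\<forall>u. \<not> E u u)"

definition no_isolated :: "'a set \<Rightarrow> ('a \<Rightarrow> 'a \<Rightarrow> bool) \<Rightarrow> bool" where
  "no_isolated V E \<longleftrightarrow> (\<forall>v\<in>V. \<exists>u\<in>V. E v u)"

definition degree :: "'a set \<Rightarrow> ('a \<Rightarrow> 'a \<Rightarrow> bool) \<Rightarrow> 'a \<Rightarrow> nat" where
  "degree V E v = card {u\<in>V. E v u}"

definition max_degree_le :: "'a set \<Rightarrow> ('a \<Rightarrow> 'a \<Rightarrow> bool) \<Rightarrow> nat \<Rightarrow> bool" where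
  "max_degree_le V E d \<longleftrightarrow> (\<forall>v\<in>V. degree V E v \<le> d)"

(* Satisfying assignments of phi(G) = AND over edges {u,v} of (u OR v).
   An assignment (one literal per variable) is represented by the set S \<subseteq> V
   of variables assigned true. *)
definition phi_models :: "'a set \<Rightarrow> ('a \<Rightarrow> 'a \<Rightarrow> bool) \<Rightarrow> 'a set set" where
  "phi_models V E = {S. S \<subseteq> V \<and> (\<forall>u v. E u v \<longrightarrow> u \<in> S \<or> v \<in> S)}"

definition phi_models_forced :: "'a set \<Rightarrow> ('a \<Rightarrow> 'a \<Rightarrow> bool) \<Rightarrow> 'a set \<Rightarrow> 'a set set" where
  "phi_models_forced V E U = {S \<in> phi_models V E. U \<subseteq> S}"

end

theory Submission
  imports Defs
begin

(* Models of phi(G) are upward closed, so forcing further variables T true costs at most a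
   factor 2^|T|. If u is forced true, then forcing also its neighbours true allows flipping u
   to false. Hence the models forced on W split into those with u true and those with u false,
   and the latter are at least a 2^-deg(u) fraction of the former. Forcing u (and dropping its
   neighbours from U) therefore gains a factor 1 + 2^-d per removal of at most d + 1 elements
   of U, which gives the bound with 2^(1/b) = (1 + 2^-d)^(1/(d+1)). Isolated vertices do no
   harm. *)

definition neighbours :: "'a set \<Rightarrow> ('a \<Rightarrow> 'a \<Rightarrow> bool) \<Rightarrow> 'a \<Rightarrow> 'a set" where
  "neighbours V E u = {v\<in>V. E u v}"

lemma card_neighbours: "card (neighbours V E u) = degree V E u"
  by (simp add: neighbours_def degree_def)

lemma neighbours_subset: "neighbours V E u \<subseteq> V"
  by (auto simp: neighbours_def)

lemma finite_phi_models: "finite V \<Longrightarrow> finite (phi_models V E)"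
  unfolding phi_models_def by (rule finite_subset[of _ "Pow V"]) auto

lemma finite_phi_models_forced: "finite V \<Longrightarrow> finite (phi_models_forced V E W)"
  unfolding phi_models_forced_def by (simp add: finite_phi_models)

lemma phi_models_forced_empty [simp]: "phi_models_forced V E {} = phi_models V E"
  unfolding phi_models_forced_def by auto

lemma phi_models_forced_antimono:
  "W \<subseteq> W' \<Longrightarrow> phi_models_forced V E W' \<subseteq> phi_models_forced V E W"
  unfolding phi_models_forced_def by auto

lemma phi_models_Un: "S \<in> phi_models V E \<Longrightarrow> T \<subseteq> V \<Longrightarrow> S \<union> T \<in> phi_models V E"
  unfolding phi_models_def by auto

lemma Diff_vertex_in_phi_models:
  assumes "simple_graph V E" "S \<in> phi_models V E" "neighbours V E u \<subseteq> S"
  shows "S - {u} \<in> phi_models V E"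
  using assms unfolding simple_graph_def phi_models_def neighbours_def by blast

lemma card_phi_models_forced_le_Un:
  assumes "finite V" "T \<subseteq> V"
  shows "card (phi_models_forced V E W) \<le> 2 ^ card T * card (phi_models_forced V E (W \<union> T))"
proof -
  have "finite T" using assms finite_subset by blast
  have "card (phi_models_forced V E W) \<le> card (phi_models_forced V E (W \<union> T) \<times> Pow T)"
  proof (rule card_inj_on_le[where f = "\<lambda>S. (S \<union> T, S \<inter> T)"])
    show "inj_on (\<lambda>S. (S \<union> T, S \<inter> T)) (phi_models_forced V E W)"
      by (rule inj_onI) blast
    show "(\<lambda>S. (S \<union> T, S \<inter> T)) ` phi_models_forced V E W
            \<subseteq> phi_models_forced V E (W \<union> T) \<times> Pow T"
      using phi_models_Un[OF _ assms(2)] unfolding phi_models_forced_def by auto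
    show "finite (phi_models_forced V E (W \<union> T) \<times> Pow T)"
      using assms(1) \<open>finite T\<close> finite_phi_models_forced by blast
  qed
  then show ?thesis
    using \<open>finite T\<close> by (simp add: card_cartesian_product card_Pow mult.commute)
qed

lemma card_phi_models_forced_vertex_le_excluded:
  assumes "simple_graph V E" "u \<notin> W"
  shows "card (phi_models_forced V E (insert u W \<union> neighbours V E u))
           \<le> card {S \<in> phi_models_forced V E W. u \<notin> S}"
proof (rule card_inj_on_le[where f = "\<lambda>S. S - {u}"])
  show "inj_on (\<lambda>S. S - {u}) (phi_models_forced V E (insert u W \<union> neighbours V E u))"
    unfolding phi_models_forced_def by (rule inj_onI) (metis insert_Diff insert_subset Un_subset_iff
        mem_Collect_eq)
  show "(\<lambda>S. S - {u}) ` phi_models_forced V E (insert u W \<union> neighbours V E u)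
          \<subseteq> {S \<in> phi_models_forced V E W. u \<notin> S}"
    using Diff_vertex_in_phi_models[OF assms(1)] assms(2) unfolding phi_models_forced_def by auto
  show "finite {S \<in> phi_models_forced V E W. u \<notin> S}"
    using assms(1) unfolding simple_graph_def
    by (auto intro: finite_subset[OF _ finite_phi_models_forced])
qed

lemma phi_models_forced_vertex_gain:
  assumes "simple_graph V E" "u \<in> V" "u \<notin> W"
  shows "(1 + 1 / 2 ^ degree V E u) * card (phi_models_forced V E (insert u W))
           \<le> card (phi_models_forced V E W)"
proof -
  define A where "A = phi_models_forced V E (insert u W)"
  define B where "B = {S \<in> phi_models_forced V E W. u \<notin> S}"
  have "finite V" using assms(1) unfolding simple_graph_def by simp
  have split: "phi_models_forced V E W = A \<union> B" "A \<inter> B = {}"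
    unfolding A_def B_def phi_models_forced_def by auto
  have "card A \<le> 2 ^ degree V E u * card (phi_models_forced V E (insert u W \<union> neighbours V E u))"
    using card_phi_models_forced_le_Un[OF \<open>finite V\<close> neighbours_subset[of V E u],
        where W = "insert u W"]
    unfolding A_def card_neighbours .
  also have "\<dots> \<le> 2 ^ degree V E u * card B"
    unfolding B_def using card_phi_models_forced_vertex_le_excluded[OF assms(1,3)] by simp
  finally have "real (card A) \<le> 2 ^ degree V E u * card B"
    by (metis of_nat_le_iff of_nat_mult of_nat_numeral of_nat_power)
  then have "card A / 2 ^ degree V E u \<le> card B"
    by (simp add: divide_le_eq mult.commute)
  then have "(1 + 1 / 2 ^ degree V E u) * card A \<le> card A + card B"
    by (simp add: algebra_simps)
  also have "\<dots> = card (phi_models_forced V E W)"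
    using split finite_phi_models_forced[OF \<open>finite V\<close>, of E W]
    by (simp add: card_Un_disjoint flip: of_nat_add)
  finally show ?thesis unfolding A_def .
qed

lemma phi_models_forced_closed_neighbourhood_gain:
  assumes "simple_graph V E" "max_degree_le V E d" "u \<in> U" "U \<subseteq> V"
  shows "(1 + 1 / 2 ^ d) * card (phi_models_forced V E U)
           \<le> card (phi_models_forced V E (U - insert u (neighbours V E u)))"
proof -
  define U' where "U' = U - insert u (neighbours V E u)"
  have "finite V" "u \<in> V" using assms unfolding simple_graph_def by auto
  have "(1 :: real) + 1 / 2 ^ d \<le> 1 + 1 / 2 ^ degree V E u"
    using assms(2) \<open>u \<in> V\<close> unfolding max_degree_le_def by (simp add: frac_le power_increasing)
  moreover have "card (phi_models_forced V E U) \<le> card (phi_models_forced V E (insert u U'))"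
    using assms(3) unfolding U'_def
    by (intro card_mono finite_phi_models_forced \<open>finite V\<close> phi_models_forced_antimono) auto
  ultimately have "(1 + 1 / 2 ^ d) * card (phi_models_forced V E U)
                     \<le> (1 + 1 / 2 ^ degree V E u) * card (phi_models_forced V E (insert u U'))"
    by (intro mult_mono) auto
  also have "\<dots> \<le> card (phi_models_forced V E U')"
    using phi_models_forced_vertex_gain[OF assms(1) \<open>u \<in> V\<close>] unfolding U'_def by simp
  finally show ?thesis unfolding U'_def .
qed

lemma card_le_card_Diff_closed_neighbourhood:
  assumes "simple_graph V E" "max_degree_le V E d" "u \<in> V" "finite U"
  shows "card U \<le> card (U - insert u (neighbours V E u)) + (d + 1)"
proof -
  define C where "C = insert u (neighbours V E u)"
  have "finite (neighbours V E u)"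
    using assms(1) neighbours_subset finite_subset unfolding simple_graph_def by metis
  then have "finite C" "card C \<le> Suc (card (neighbours V E u))"
    unfolding C_def by (simp_all add: card_insert_if)
  have "card U \<le> card ((U - C) \<union> C)"
    using assms(4) \<open>finite C\<close> by (intro card_mono) auto
  also have "\<dots> \<le> card (U - C) + card C" by (rule card_Un_le)
  also have "card C \<le> d + 1"
    using \<open>card C \<le> Suc (card (neighbours V E u))\<close> assms(2,3)
    unfolding max_degree_le_def card_neighbours by (metis Suc_eq_plus1 Suc_le_mono le_trans)
  finally show ?thesis unfolding C_def by simp
qed

lemma powr_le_mult_powr:
  fixes r :: real
  assumes "1 \<le> r" "x \<le> y + 1"
  shows "r powr x \<le> r * r powr y"
proof -
  have "r powr x \<le> r powr (y + 1)" using powr_mono[OF assms(2,1)] .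
  then show ?thesis using assms(1) by (simp add: powr_add mult.commute)
qed

lemma card_phi_models_forced_mult_powr_le:
  assumes "simple_graph V E" "max_degree_le V E d" "U \<subseteq> V"
  shows "card (phi_models_forced V E U) * (1 + 1 / 2 ^ d) powr (card U / (real d + 1))
           \<le> card (phi_models V E)"
  using assms(3)
proof (induction "card U" arbitrary: U rule: less_induct)
  case less
  define r :: real where "r = 1 + 1 / 2 ^ d"
  show ?case
  proof (cases "U = {}")
    case False
    then obtain u where "u \<in> U" by auto
    define U' where "U' = U - insert u (neighbours V E u)"
    have "finite U" "u \<in> V"
      using assms(1) less.prems \<open>u \<in> U\<close> finite_subset unfolding simple_graph_def by auto
    have "card U' < card U"
      unfolding U'_def using \<open>finite U\<close> \<open>u \<in> U\<close> by (intro psubset_card_mono) auto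
    moreover have "U' \<subseteq> V" using less.prems unfolding U'_def by auto
    ultimately have IH: "card (phi_models_forced V E U') * r powr (card U' / (real d + 1))
                           \<le> card (phi_models V E)"
      using less.hyps unfolding r_def by blast
    have "card U \<le> card U' + (d + 1)"
      using card_le_card_Diff_closed_neighbourhood[OF assms(1,2) \<open>u \<in> V\<close> \<open>finite U\<close>]
      unfolding U'_def .
    then have "card U / (real d + 1) \<le> (card U' + (real d + 1)) / (real d + 1)"
      by (intro divide_right_mono) auto
    then have "card U / (real d + 1) \<le> card U' / (real d + 1) + 1"
      by (simp add: add_divide_distrib)
    then have exponent: "r powr (card U / (real d + 1)) \<le> r * r powr (card U' / (real d + 1))"
      unfolding r_def by (intro powr_le_mult_powr) auto
    have "card (phi_models_forced V E U) * r powr (card U / (real d + 1))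
                 \<le> (r * card (phi_models_forced V E U)) * r powr (card U' / (real d + 1))"
      using mult_left_mono[OF exponent of_nat_0_le_iff] by (simp add: mult_ac)
    also have "\<dots> \<le> card (phi_models_forced V E U') * r powr (card U' / (real d + 1))"
      using phi_models_forced_closed_neighbourhood_gain[OF assms(1,2) \<open>u \<in> U\<close> less.prems]
      unfolding r_def U'_def by (simp add: mult_right_mono)
    finally show ?thesis using IH unfolding r_def by linarith
  qed simp
qed

theorem theorem4:
  fixes d :: nat
  assumes "d \<ge> 1"
  shows "\<exists>b::real. b > 1 \<and>
    (\<forall>(V :: nat set) (E :: nat \<Rightarrow> nat \<Rightarrow> bool) U.
       simple_graph V E \<and> no_isolated V E \<and> max_degree_le V E d \<and> U \<subseteq> V \<longrightarrow>
       real (card (phi_models_forced V E U))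
         \<le> real (card (phi_models V E)) / 2 powr (real (card U) / b))"
proof -
  define r :: real where "r = 1 + 1 / 2 ^ d"
  have "1 < r" "r < 2" unfolding r_def using assms by (auto simp: power_le_one_iff)
  define b where "b = (d + 1) / log 2 r"
  have "0 < log 2 r" "log 2 r < 1" using \<open>1 < r\<close> \<open>r < 2\<close> by auto
  then have "b > 1"
    unfolding b_def by (simp add: less_divide_eq)
  have rescale: "2 powr (x / b) = r powr (x / (real d + 1))" for x
  proof -
    have "2 powr (x / b) = (2 powr log 2 r) powr (x / (real d + 1))"
      unfolding b_def powr_powr by (simp add: field_simps)
    also have "\<dots> = r powr (x / (real d + 1))" using \<open>1 < r\<close> by simp
    finally show ?thesis .
  qed
  show ?thesis
  proof (intro exI[of _ b] conjI allI impI)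
    fix V :: "nat set" and E U
    assume "simple_graph V E \<and> no_isolated V E \<and> max_degree_le V E d \<and> U \<subseteq> V"
    then show "card (phi_models_forced V E U) \<le> card (phi_models V E) / 2 powr (card U / b)"
      using card_phi_models_forced_mult_powr_le[of V E d U, folded r_def] \<open>1 < r\<close>
      unfolding rescale by (simp add: le_divide_eq)
  qed fact
qed

end
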